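(* Let $\langle\mathcal{D},\sigma,\varphi\rangle$ be a hybrid temporal achievement causal setting. Then $$\mathcal{D}\models\mathit{AchvSit}(s_\varphi,\varphi,\sigma)\land\sigma<s^*\land\big(\forall s',t.\;\sigma\le s'\le s^*\land\mathit{start}(s')\le t\le\mathit{end}(s',s^* )\supset\varphi[t,s']\big)\supset\mathit{AchvSit}(s_\varphi,\varphi,s^* )$$ (free variables $s_\varphi,s^*$ universally quantified).
   Context: Hybrid temporal situation calculus (HTSC): $S_0$ initial situation, $do(a,s)$ successor situation, $do([a_1,\dots,a_n],s)$ the nesting. $s\sqsubset s'$: $s'$ reachable from $s$ by one or more actions; $s\sqsubseteq s'$: $s\sqsubset s'\lor s=s'$. $\mathit{time}(a(\vec x,t))=t$, $\mathit{start}(do(a,s))=\mathit{time}(a)$. $\mathit{Exec}(s)\doteq\forall a,s'.(do(a,s')\sqsubseteq s\supset\mathit{Poss}(a,s')\land\mathit{start}(s')\le\mathit{time}(a))$; $s<s'$ abbreviates $s\sqsubset s'\land\mathit{Exec}(s')$; $s\le s'$ abbreviates $s<s'\lor s=s'$. A hybrid basic action theory $\mathcal{D}$ contains initial-state, precondition, successor-state (discrete fluents), state evolution (temporal fluents), unique-names and foundational axioms; each temporal fluent $f$ has a state evolution axiom $f(\vec x,t,s)=y\equiv[\bigvee_i(\gamma^f_i(\vec x,s)\land\delta_i(\vec x,y,t,s))\lor(y=f(\vec x,\mathit{start}(s),s)\land\neg\bigvee_i\gamma^f_i(\vec x,s))]$ with mutually exclusive contexts $\gamma^f_i$. An effect $\varphi$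 is a situation- and time-suppressed formula, uniform in the situation, constraining the value of a single primitive temporal fluent $f$; $\varphi[t,s]$ restores time $t$ and situation $s$. $\mathit{end}(s',s)=\mathit{start}(s')$ if $s'=s$; $=\mathit{time}(a)$ if $do(a,s')\le s$. $\mathit{AchvSitAux}(s_\varphi,\varphi,s)\doteq\varphi[\mathit{end}(s_\varphi,s),s_\varphi]\land\forall s',t.(s_\varphi<s'\le s\land\mathit{start}(s')\le t\le\mathit{end}(s',s)\supset\varphi[t,s'])$; $\mathit{AchvSit}(s_\varphi,\varphi,s)\doteq\mathit{AchvSitAux}(s_\varphi,\varphi,s)\land\neg\exists s''.(s''<s_\varphi\land\mathit{AchvSitAux}(s'',\varphi,s))$. Hybrid temporal achievement causal setting $\langle\mathcal{D},\sigma,\varphi\rangle$: $\sigma=do([\alpha_1,\dots,\alpha_n],S_0)$ ground, $n\ge1$, and $\mathcal{D}\models\mathit{Exec}(\sigma)\land\neg\varphi[\mathit{start}(S_0),S_0]\land\neg\varphi[\mathit{time}(\alpha_1),S_0]\land\varphi[\mathit{start}(\sigma),\sigma]$. *)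

theory Defs
  imports Main "HOL.Real"
begin

text \<open>Situations of the (hybrid temporal) situation calculus. The foundational
axioms (including second-order induction) force the situations of every model to
form exactly this tree: S0 and do(a,s).\<close>

datatype 'a sit = S0 | Do 'a "'a sit"

fun sqsub :: "'a sit \<Rightarrow> 'a sit \<Rightarrow> bool" where
  "sqsub s S0 = False"
| "sqsub s (Do a s') = (s = s' \<or> sqsub s s')"

definition sqsubeq :: "'a sit \<Rightarrow> 'a sit \<Rightarrow> bool" where
  "sqsubeq s s' \<longleftrightarrow> sqsub s s' \<or> s = s'"

text \<open>start(S0) = t0 (the start time of the initial situation), start(do(a,s)) = time(a).
  tm interprets the function time on actions.\<close>
fun start :: "real \<Rightarrow> ('a \<Rightarrow> real) \<Rightarrow> 'a sit \<Rightarrow> real" where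
  "start t0 tm S0 = t0"
| "start t0 tm (Do a s) = tm a"

definition Exec :: "('a \<Rightarrow> 'a sit \<Rightarrow> bool) \<Rightarrow> real \<Rightarrow> ('a \<Rightarrow> real) \<Rightarrow> 'a sit \<Rightarrow> bool" where
  "Exec Poss t0 tm s \<longleftrightarrow>
     (\<forall>a s'. sqsubeq (Do a s') s \<longrightarrow> Poss a s' \<and> start t0 tm s' \<le> tm a)"

definition slt :: "('a \<Rightarrow> 'a sit \<Rightarrow> bool) \<Rightarrow> real \<Rightarrow> ('a \<Rightarrow> real) \<Rightarrow> 'a sit \<Rightarrow> 'a sit \<Rightarrow> bool" where
  "slt Poss t0 tm s s' \<longleftrightarrow> sqsub s s' \<and> Exec Poss t0 tm s'"

definition sle :: "('a \<Rightarrow> 'a sit \<Rightarrow> bool) \<Rightarrow> real \<Rightarrow> ('a \<Rightarrow> real) \<Rightarrow> 'a sit \<Rightarrow> 'a sit \<Rightarrow> bool" where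
  "sle Poss t0 tm s s' \<longleftrightarrow> slt Poss t0 tm s s' \<or> s = s'"

text \<open>end(s',s): start(s') if s' = s; time(a) if do(a,s') \<le> s (such a is unique).
  Outside this domain the value is an unspecified (but fixed) real.\<close>
definition endt :: "('a \<Rightarrow> 'a sit \<Rightarrow> bool) \<Rightarrow> real \<Rightarrow> ('a \<Rightarrow> real) \<Rightarrow> 'a sit \<Rightarrow> 'a sit \<Rightarrow> real" where
  "endt Poss t0 tm s' s =
     (if s' = s then start t0 tm s'
      else tm (THE a. sle Poss t0 tm (Do a s') s))"

text \<open>phi t s stands for the effect with time t and situation s restored, \<open>\<phi>[t,s]\<close>.\<close>
definition AchvSitAux ::
  "('a \<Rightarrow> 'a sit \<Rightarrow> bool) \<Rightarrow> real \<Rightarrow> ('a \<Rightarrow> real) \<Rightarrow> (real \<Rightarrow> 'a sit \<Rightarrow> bool)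
   \<Rightarrow> 'a sit \<Rightarrow> 'a sit \<Rightarrow> bool" where
  "AchvSitAux Poss t0 tm phi sphi s \<longleftrightarrow>
     phi (endt Poss t0 tm sphi s) sphi \<and>
     (\<forall>s' t. slt Poss t0 tm sphi s' \<and> sle Poss t0 tm s' s \<and>
             start t0 tm s' \<le> t \<and> t \<le> endt Poss t0 tm s' s \<longrightarrow> phi t s')"

definition AchvSit ::
  "('a \<Rightarrow> 'a sit \<Rightarrow> bool) \<Rightarrow> real \<Rightarrow> ('a \<Rightarrow> real) \<Rightarrow> (real \<Rightarrow> 'a sit \<Rightarrow> bool)
   \<Rightarrow> 'a sit \<Rightarrow> 'a sit \<Rightarrow> bool" where
  "AchvSit Poss t0 tm phi sphi s \<longleftrightarrow>
     AchvSitAux Poss t0 tm phi sphi s \<and>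
     \<not> (\<exists>s''. slt Poss t0 tm s'' sphi \<and> AchvSitAux Poss t0 tm phi s'' s)"

text \<open>Hybrid temporal achievement causal setting: sigma = do([alpha_1,...,alpha_n],S0), n \<ge> 1,
  executable, phi false at start(S0) and at time(alpha_1) in S0, true at start(sigma) in sigma.\<close>
definition CausalSetting ::
  "('a \<Rightarrow> 'a sit \<Rightarrow> bool) \<Rightarrow> real \<Rightarrow> ('a \<Rightarrow> real) \<Rightarrow> (real \<Rightarrow> 'a sit \<Rightarrow> bool)
   \<Rightarrow> 'a sit \<Rightarrow> bool" where
  "CausalSetting Poss t0 tm phi sigma \<longleftrightarrow>
     sigma \<noteq> S0 \<and>
     Exec Poss t0 tm sigma \<and>
     \<not> phi (start t0 tm S0) S0 \<and>
     (\<forall>a1. sqsubeq (Do a1 S0) sigma \<longrightarrow> \<not> phi (tm a1) S0) \<and>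
     phi (start t0 tm sigma) sigma"

end

theory Submission
  imports Defs
begin

text \<open>Replacing the end situation \<open>\<sigma>\<close> by an executable extension \<open>s\<^sup>*\<close> changes \<open>end(s,\<cdot>)\<close> only
  for the situations \<open>\<sigma> \<sqsubseteq> s \<sqsubseteq> s\<^sup>*\<close>, and the intervals of these situations are exactly the ones on
  which \<open>\<phi>\<close> is assumed to hold. Hence \<open>s\<^sub>\<phi>\<close> still achieves \<open>\<phi>\<close> in \<open>s\<^sup>*\<close>. For minimality, a
  situation \<open>s'' < s\<^sub>\<phi>\<close> achieving \<open>\<phi>\<close> in \<open>s\<^sup>*\<close> either lies above \<open>\<sigma>\<close>, and then \<open>\<sigma>\<close> itself (where
  \<open>\<phi>\<close> holds at \<open>start(\<sigma>)\<close>) is an earlier achievement situation for \<open>\<sigma>\<close>, or it does not, and then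
  it already achieves \<open>\<phi>\<close> in \<open>\<sigma>\<close>. Both contradict the minimality of \<open>s\<^sub>\<phi>\<close> for \<open>\<sigma>\<close>.\<close>

lemma sqsub_imp_size_less: "sqsub s x \<Longrightarrow> size s < size x"
  by (induction x) auto

lemma sqsub_irrefl: "\<not> sqsub s s"
  using sqsub_imp_size_less by blast

lemma sqsub_trans: "sqsub a b \<Longrightarrow> sqsub b c \<Longrightarrow> sqsub a c"
  by (induction c) auto

lemma sqsubeq_trans: "sqsubeq a b \<Longrightarrow> sqsubeq b c \<Longrightarrow> sqsubeq a c"
  unfolding sqsubeq_def using sqsub_trans by blast

lemma sqsub_if_Do_sqsubeq: "sqsubeq (Do a s) x \<Longrightarrow> sqsub s x"
  unfolding sqsubeq_def using sqsub_trans[of s "Do a s" x] by auto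

lemma sqsub_imp_ex_Do_sqsubeq: "sqsub s x \<Longrightarrow> \<exists>a. sqsubeq (Do a s) x"
  by (induction x) (auto simp: sqsubeq_def)

lemma sqsubeq_linear_below: "sqsubeq a c \<Longrightarrow> sqsubeq b c \<Longrightarrow> sqsubeq a b \<or> sqsubeq b a"
  by (induction c) (auto simp: sqsubeq_def)

lemma sqsubeq_Do_unique: "sqsubeq (Do a s) x \<Longrightarrow> sqsubeq (Do b s) x \<Longrightarrow> a = b"
  using sqsubeq_linear_below[of "Do a s" x "Do b s"]
    sqsub_imp_size_less[of "Do a s" s] sqsub_imp_size_less[of "Do b s" s]
  by (auto simp: sqsubeq_def)

lemma Exec_sqsubeq_mono: "Exec P t0 tm x \<Longrightarrow> sqsubeq y x \<Longrightarrow> Exec P t0 tm y"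
  unfolding Exec_def using sqsubeq_trans by blast

lemma sle_iff_sqsubeq: "Exec P t0 tm x \<Longrightarrow> sle P t0 tm y x \<longleftrightarrow> sqsubeq y x"
  unfolding sle_def slt_def sqsubeq_def by auto

lemma endt_Do: "Exec P t0 tm x \<Longrightarrow> sqsubeq (Do a s) x \<Longrightarrow> endt P t0 tm s x = tm a"
proof -
  assume exec: "Exec P t0 tm x" and Do_below: "sqsubeq (Do a s) x"
  have "s \<noteq> x"
    using sqsub_if_Do_sqsubeq[OF Do_below] sqsub_irrefl by blast
  moreover have "(THE b. sle P t0 tm (Do b s) x) = a"
    using Do_below sqsubeq_Do_unique sle_iff_sqsubeq[OF exec] by (intro the_equality) auto
  ultimately show ?thesis
    unfolding endt_def by simp
qed

lemma endt_outside_domain: "\<not> sqsubeq s x \<Longrightarrow> endt P t0 tm s x = tm (THE b. False)"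
proof -
  assume "\<not> sqsubeq s x"
  moreover have "(\<lambda>b. sle P t0 tm (Do b s) x) = (\<lambda>b. False)"
    using calculation sqsub_if_Do_sqsubeq unfolding sle_def slt_def sqsubeq_def by fastforce
  ultimately show ?thesis
    unfolding endt_def sqsubeq_def by simp
qed

lemma start_le_endt: "Exec P t0 tm x \<Longrightarrow> sqsubeq s x \<Longrightarrow> start t0 tm s \<le> endt P t0 tm s x"
proof (cases "s = x")
  case True
  then show ?thesis
    unfolding endt_def by simp
next
  assume exec: "Exec P t0 tm x" and "sqsubeq s x" and "s \<noteq> x"
  then obtain a where Do_below: "sqsubeq (Do a s) x"
    using sqsub_imp_ex_Do_sqsubeq unfolding sqsubeq_def by blast
  then show ?thesis
    using endt_Do[OF exec Do_below] exec unfolding Exec_def by simp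
qed

lemma endt_extension_eq:
  assumes "Exec P t0 tm x'" "sqsubeq x x'" "\<not> (sqsubeq x s \<and> sqsubeq s x')"
  shows "endt P t0 tm s x' = endt P t0 tm s x"
proof (cases "sqsub s x")
  case True
  then obtain a where "sqsubeq (Do a s) x"
    using sqsub_imp_ex_Do_sqsubeq by blast
  then show ?thesis
    using assms endt_Do Exec_sqsubeq_mono sqsubeq_trans by metis
next
  case False
  then have "\<not> sqsubeq s x'" "\<not> sqsubeq s x"
    using assms sqsubeq_linear_below unfolding sqsubeq_def by blast+
  then show ?thesis
    by (simp add: endt_outside_domain)
qed

lemma AchvSitAux_Exec_iff:
  assumes "Exec P t0 tm s"
  shows "AchvSitAux P t0 tm phi x s \<longleftrightarrow>
    phi (endt P t0 tm x s) x \<and>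
    (\<forall>s' t. sqsub x s' \<and> sqsubeq s' s \<and> start t0 tm s' \<le> t \<and> t \<le> endt P t0 tm s' s
       \<longrightarrow> phi t s')"
  using assms Exec_sqsubeq_mono sle_iff_sqsubeq
  unfolding AchvSitAux_def slt_def by meson

lemma AchvSitAux_self: "phi (start t0 tm s) s \<Longrightarrow> AchvSitAux P t0 tm phi s s"
  unfolding AchvSitAux_def endt_def slt_def sle_def
  using sqsub_irrefl sqsub_trans by auto

lemma AchvSitAux_extend:
  assumes exec: "Exec P t0 tm x'" and below: "sqsubeq x x'"
    and aux: "AchvSitAux P t0 tm phi sphi x"
    and phi_between: "\<And>s' t. sqsubeq x s' \<Longrightarrow> sqsubeq s' x' \<Longrightarrow>
      start t0 tm s' \<le> t \<Longrightarrow> t \<le> endt P t0 tm s' x' \<Longrightarrow> phi t s'"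
  shows "AchvSitAux P t0 tm phi sphi x'"
proof -
  have exec_x: "Exec P t0 tm x"
    using exec below Exec_sqsubeq_mono by blast
  have "phi (endt P t0 tm sphi x') sphi"
  proof (cases "sqsubeq x sphi \<and> sqsubeq sphi x'")
    case True
    then show ?thesis
      using phi_between start_le_endt[OF exec] by blast
  next
    case False
    then show ?thesis
      using aux endt_extension_eq[OF exec below] unfolding AchvSitAux_def by simp
  qed
  moreover have "phi t s'"
    if "sqsub sphi s'" "sqsubeq s' x'" "start t0 tm s' \<le> t" "t \<le> endt P t0 tm s' x'" for s' t
  proof (cases "sqsubeq x s'")
    case True
    then show ?thesis
      using that phi_between by blast
  next
    case False
    then have "sqsubeq s' x"
      using sqsubeq_linear_below[OF \<open>sqsubeq s' x'\<close> below] by blast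
    then show ?thesis
      using that aux endt_extension_eq[OF exec below, of s'] False
      unfolding AchvSitAux_Exec_iff[OF exec_x] by auto
  qed
  ultimately show ?thesis
    unfolding AchvSitAux_Exec_iff[OF exec] by blast
qed

lemma AchvSitAux_restrict:
  assumes exec: "Exec P t0 tm x'" and below: "sqsubeq x x'" and not_above: "\<not> sqsubeq x s''"
    and aux: "AchvSitAux P t0 tm phi s'' x'"
  shows "AchvSitAux P t0 tm phi s'' x"
proof -
  have exec_x: "Exec P t0 tm x"
    using exec below Exec_sqsubeq_mono by blast
  have "phi (endt P t0 tm s'' x) s''"
    using aux not_above endt_extension_eq[OF exec below] unfolding AchvSitAux_def by simp
  moreover have "phi t s'"
    if "sqsub s'' s'" "sqsubeq s' x" "start t0 tm s' \<le> t" "t \<le> endt P t0 tm s' x" for s' t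
  proof (cases "s' = x")
    case True
    moreover have "endt P t0 tm x x = start t0 tm x"
      unfolding endt_def by simp
    ultimately have "t \<le> endt P t0 tm s' x'"
      using that start_le_endt[OF exec below] by simp
    then show ?thesis
      using that aux below True unfolding AchvSitAux_Exec_iff[OF exec] by blast
  next
    case False
    then have "sqsub s' x"
      using \<open>sqsubeq s' x\<close> unfolding sqsubeq_def by blast
    then have "sqsubeq s' x'" "endt P t0 tm s' x' = endt P t0 tm s' x"
      using below endt_extension_eq[OF exec below, of s'] sqsub_irrefl sqsub_trans
      unfolding sqsubeq_def by blast+
    then show ?thesis
      using that aux unfolding AchvSitAux_Exec_iff[OF exec] by simp
  qed
  ultimately show ?thesis
    unfolding AchvSitAux_Exec_iff[OF exec_x] by blast
qed

theorem lemma5p5: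
  fixes Poss :: "'a \<Rightarrow> 'a sit \<Rightarrow> bool" and t0 :: real and tm :: "'a \<Rightarrow> real"
    and phi :: "real \<Rightarrow> 'a sit \<Rightarrow> bool" and sigma sphi sstar :: "'a sit"
  assumes "CausalSetting Poss t0 tm phi sigma"
  shows "AchvSit Poss t0 tm phi sphi sigma \<and> slt Poss t0 tm sigma sstar \<and>
         (\<forall>s' t. sle Poss t0 tm sigma s' \<and> sle Poss t0 tm s' sstar \<and>
                 start t0 tm s' \<le> t \<and> t \<le> endt Poss t0 tm s' sstar \<longrightarrow> phi t s')
         \<longrightarrow> AchvSit Poss t0 tm phi sphi sstar"
proof (intro impI, elim conjE)
  assume achv: "AchvSit Poss t0 tm phi sphi sigma" and "slt Poss t0 tm sigma sstar"
    and phi_between: "\<forall>s' t. sle Poss t0 tm sigma s' \<and> sle Poss t0 tm s' sstar \<and>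
                 start t0 tm s' \<le> t \<and> t \<le> endt Poss t0 tm s' sstar \<longrightarrow> phi t s'"
  then have exec: "Exec Poss t0 tm sstar" and below: "sqsubeq sigma sstar"
    unfolding slt_def sqsubeq_def by auto
  have sigma_achieves: "AchvSitAux Poss t0 tm phi sigma sigma"
    using assms AchvSitAux_self unfolding CausalSetting_def by blast
  have "AchvSitAux Poss t0 tm phi sphi sstar"
    using AchvSitAux_extend[OF exec below] achv phi_between sle_iff_sqsubeq[OF exec]
      sle_iff_sqsubeq[OF Exec_sqsubeq_mono[OF exec]]
    unfolding AchvSit_def by blast
  moreover have "\<not> AchvSitAux Poss t0 tm phi s'' sstar" if "slt Poss t0 tm s'' sphi" for s''
  proof (cases "sqsubeq sigma s''")
    case True
    then have "slt Poss t0 tm sigma sphi"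
      using that sqsub_trans unfolding slt_def sqsubeq_def by blast
    then show ?thesis
      using achv sigma_achieves unfolding AchvSit_def by blast
  next
    case False
    then show ?thesis
      using that achv AchvSitAux_restrict[OF exec below False] unfolding AchvSit_def by blast
  qed
  ultimately show "AchvSit Poss t0 tm phi sphi sstar"
    unfolding AchvSit_def by blast
qed

end
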